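(* Let $\mathfrak{X}=\mathbb{Z}\times\mathbb{Z}_{\geq 1}$ and consider, for each time $t\ge 0$, a random subset $X_t\subset\mathfrak{X}$ (a point process) with the following properties. (i) For each $n\ge1$ the number of points of $X_t$ on the level $\mathbb{Z}\times\{n\}$ is a deterministic finite number $m_n$, independent of $t$, with $m_n\le m_{n+1}\le m_n+1$; put $\delta_n=m_{n+1}-m_n\in\{0,1\}$. (ii) Almost surely $X_t$ is interlacing: writing $x_1^{(n)}>\dots>x_{m_n}^{(n)}$ for the first coordinates of the points on level $n$, one has $x_{k+1}^{(n+1)}<x_k^{(n)}\le x_k^{(n+1)}$ if $\delta_n=0$, and $x_{k+1}^{(n+1)}\le x_k^{(n)}< x_k^{(n+1)}$ if $\delta_n=1$, for all meaningful $k$. (iii) The process is determinantal with kernel $K(x,n,x',n',t)$: for distinct $(x_1,n_1),\dots,(x_k,n_k)\in\mathfrak{X}$, $\mathbb{P}(\text{there is a point of }X_t\text{ at each }(x_j,n_j))=\det[K(x_i,n_i,x_j,n_j,t)]_{i,j=1}^k$. Let $\tilde K(x,n,x',n',t)=\frac{\mathcal{C}(x,n)}{\mathcal{C}(x',n')}K(x,n,x',n',t)$ for some nowhere-vanishing function $\mathcal{C}$ on $\mathfrak{X}$, and suppose there is an integer $L$ such that for every $t\ge 0$: (C1) for all $(x,n),(x',n')\in\mathfrak{X}$ with $x,x'\ge L$: $\tilde K(x,n,x',n',t)+\tilde K(x,n,x'-1+\delta_{n'},n'+1,t)+\tilde K(x,n,x'+\delta_{n'},n'+1,t)$ equals $1$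 if $(x,n)=(x',n')$ and $0$ otherwise; (C2) for all $(x,n),(x',n')\in\mathfrak{X}$ with $n\ge2$ and $x,x'\ge L$: $\tilde K(x,n,x',n',t)+\tilde K(x+1-\delta_{n-1},n-1,x',n',t)+\tilde K(x-\delta_{n-1},n-1,x',n',t)$ equals $1$ if $(x,n)=(x',n')$ and $0$ otherwise; (C3) for all $n,n',n''$ and all $x',x''>L$: $\tilde K(x,n,x',n',t)\,\tilde K(x'',n'',x-1+\delta_n,n+1,t)\to0$ as $x\to\infty$; (C4) for all $n,n',n''$ and all $x',x''>L$: $\tilde K(x,n,x',n',t)\,\tilde K(x'',n'',x+\delta_n,n+1,t)\to0$ as $x\to\infty$; (C5) $\tilde K(x,n,x-1+\delta_n,n+1,t)\to 0$ as $x\to\infty$; (C6) $\tilde K(x,n,x+\delta_n,n+1,t)\to 1$ as $x\to\infty$. Then for every $t\ge0$ and every non-overlapping sequence $(x_1,n_1,x_1',n_1'),\dots,(x_k,n_k,x_k',n_k')$ of viable elements of $\mathfrak{X}\times\mathfrak{X}$ with $x_1,x_1',\dots,x_k,x_k'>L$, \[ \mathbb{P}\big(\text{the lozenge }(x_j,n_j,x_j',n_j')\text{ is present at time }t\text{ for each }j=1,\dots,k\big)=\det[\tilde K(x_i,n_i,x_j',n_j',t)]_{1\le i,j\le k}. \]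
   Context: Lozenges: an element $(x,n,x',n')\in\mathfrak{X}\times\mathfrak{X}$ is called viable if $(x',n')$ is one of $(x,n)$ (type I), $(x-1+\delta_n,n+1)$ (type II), or $(x+\delta_n,n+1)$ (type III); one thinks of $(x,n)$ as a black triangle and $(x',n')$ as a white triangle of a hexagonal lattice, the lozenge being their union. A sequence of viable elements $(x_j,n_j,x_j',n_j')$ is non-overlapping if the points $(x_j,n_j)$ are pairwise distinct and the points $(x_j',n_j')$ are pairwise distinct (a coincidence $(x_i,n_i)=(x_j',n_j')$ is allowed). An interlacing configuration $X$ determines the lozenge tiling as follows: for $(x,n)\in X$ the type I lozenge $(x,n,x,n)$ is present (type I lozenges are exactly the particles); for $(x,n)\notin X$, the type II lozenge $(x,n,x-1+\delta_n,n+1)$ is present if there is $k\in\{1,\dots,m_{n+1}\}$ with $x_k^{(n)}<x\le x_k^{(n+1)}-\delta_n$ (with the convention $x^{(n)}_{m_n+1}=-\infty$ when $\delta_n=1$), and otherwise the type III lozenge $(x,n,x+\delta_n,n+1)$ is present. A lozenge is "present at time $t$" if it belongs to the tiling determined by $X_t$. *)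

theory Defs
  imports "HOL-Probability.Probability" "Jordan_Normal_Form.Determinant"
begin

definition Xfrak :: "(int \<times> nat) set" where
  "Xfrak = {(x, n). n \<ge> 1}"

definition delta :: "(nat \<Rightarrow> nat) \<Rightarrow> nat \<Rightarrow> int" where
  "delta m n = int (m (Suc n)) - int (m n)"

definition level :: "(int \<times> nat) set \<Rightarrow> nat \<Rightarrow> int set" where
  "level S n = {x. (x, n) \<in> S}"

definition xk :: "(int \<times> nat) set \<Rightarrow> nat \<Rightarrow> nat \<Rightarrow> int" where
  "xk S n k = rev (sorted_list_of_set (level S n)) ! (k - 1)"

definition interlacing :: "(nat \<Rightarrow> nat) \<Rightarrow> (int \<times> nat) set \<Rightarrow> bool" where
  "interlacing m S \<longleftrightarrow>
     (\<forall>n\<ge>1. \<forall>k. 1 \<le> k \<and> k \<le> m n \<longrightarrow>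
        (if delta m n = 0 then
           (k \<le> m (Suc n) \<longrightarrow> xk S n k \<le> xk S (Suc n) k) \<and>
           (k + 1 \<le> m (Suc n) \<longrightarrow> xk S (Suc n) (k + 1) < xk S n k)
         else
           (k \<le> m (Suc n) \<longrightarrow> xk S n k < xk S (Suc n) k) \<and>
           (k + 1 \<le> m (Suc n) \<longrightarrow> xk S (Suc n) (k + 1) \<le> xk S n k)))"

definition viable :: "(nat \<Rightarrow> nat) \<Rightarrow> int \<times> nat \<times> int \<times> nat \<Rightarrow> bool" where
  "viable m l = (case l of (x, n, x', n') \<Rightarrow>
     n \<ge> 1 \<and> n' \<ge> 1 \<and>
     ((x', n') = (x, n) \<or> (x', n') = (x - 1 + delta m n, Suc n) \<or> (x', n') = (x + delta m n, Suc n)))"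

text \<open>Condition for the type II lozenge at (x,n) (when (x,n) is not a particle):
  exists k in {1..m_{n+1}} with x_k^{(n)} < x <= x_k^{(n+1)} - delta_n, where
  x^{(n)}_{m_n+1} = -infinity (only reachable when delta_n = 1).\<close>
definition typeII_cond :: "(nat \<Rightarrow> nat) \<Rightarrow> (int \<times> nat) set \<Rightarrow> int \<Rightarrow> nat \<Rightarrow> bool" where
  "typeII_cond m S x n \<longleftrightarrow>
     (\<exists>k. 1 \<le> k \<and> k \<le> m (Suc n) \<and> (k \<le> m n \<longrightarrow> xk S n k < x) \<and>
          x \<le> xk S (Suc n) k - delta m n)"

definition lozenge_present :: "(nat \<Rightarrow> nat) \<Rightarrow> (int \<times> nat) set \<Rightarrow> int \<times> nat \<times> int \<times> nat \<Rightarrow> bool" where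
  "lozenge_present m S l = (case l of (x, n, x', n') \<Rightarrow>
     (if (x', n') = (x, n) then (x, n) \<in> S
      else if (x', n') = (x - 1 + delta m n, Suc n) then (x, n) \<notin> S \<and> typeII_cond m S x n
      else if (x', n') = (x + delta m n, Suc n) then (x, n) \<notin> S \<and> \<not> typeII_cond m S x n
      else False))"

definition Ktilde :: "(int \<times> nat \<Rightarrow> real) \<Rightarrow> (int \<Rightarrow> nat \<Rightarrow> int \<Rightarrow> nat \<Rightarrow> real \<Rightarrow> real)
    \<Rightarrow> int \<Rightarrow> nat \<Rightarrow> int \<Rightarrow> nat \<Rightarrow> real \<Rightarrow> real" where
  "Ktilde C K x n x' n' t = C (x, n) / C (x', n') * K x n x' n' t"

end

theory Submission
  imports Defs
begin

(* Both sides of the identity are functions F of a finite list of lozenges satisfying the same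
   relations: F vanishes if two lozenges share a triangle; summing F over the three lozenges that
   can cover a fixed black (or white) triangle amounts to dropping that triangle; and F is continuous
   as a type III lozenge moves off to the right. For probabilities this is the partition of the
   triangles by the tiling, together with the finiteness of each level; for the determinant it is
   Laplace expansion combined with (C1), (C2), (C4) and (C6). These relations determine F from its
   values on lists of type I lozenges, where both sides are the correlation functions (conjugating
   by C does not change determinants). The induction is on the number of lozenges not of type I:
   the black relation trades a type II lozenge for type I and III ones, and a type III lozenge can
   be pushed to the right, without changing F, until F is its limit. *)

lemma sorted_wrt_greater_nth_le_iff:
  fixes l :: "'a::linorder list"
  assumes "sorted_wrt (>) l" "i < length l" "j < length l"
  shows "l ! i \<le> l ! j \<longleftrightarrow> j \<le> i"
  using sorted_wrt_nth_less[OF assms(1), of i j] sorted_wrt_nth_less[OF assms(1), of j i] assms(2,3)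
  by (cases i j rule: linorder_cases) auto

lemma le_nth_rev_sorted_list_of_set_iff:
  fixes A :: "'a::linorder set"
  assumes "finite A" "k < card A"
  shows "x \<le> rev (sorted_list_of_set A) ! k \<longleftrightarrow> k < card {y\<in>A. x \<le> y}"
proof -
  define l where "l = rev (sorted_list_of_set A)"
  define N where "N = card A"
  have len: "length l = N" and dist: "distinct l" and set_l: "set l = A"
    using assms unfolding l_def N_def by simp_all
  have "sorted_wrt (>) l"
    unfolding l_def by (simp add: sorted_wrt_rev)
  then have nth_le_iff: "l ! i \<le> l ! j \<longleftrightarrow> j \<le> i" if "i < N" "j < N" for i j
    using that len by (simp add: sorted_wrt_greater_nth_le_iff)
  have card_image: "card (((!) l) ` I) = card I" if "I \<subseteq> {..<N}" for I
    using that dist len by (intro card_image inj_on_subset[OF inj_on_nth]) auto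
  define I where "I = {i. i < N \<and> x \<le> l ! i}"
  have "{y\<in>A. x \<le> y} = ((!) l) ` I"
    unfolding I_def set_l[symmetric] by (auto simp: in_set_conv_nth len)
  then have card_eq: "card {y\<in>A. x \<le> y} = card I"
    using card_image[of I] by (simp add: I_def subset_eq)
  have fin_I: "finite I" unfolding I_def by simp
  show ?thesis
  proof
    assume "x \<le> rev (sorted_list_of_set A) ! k"
    then have "x \<le> l ! k" unfolding l_def .
    have "{..k} \<subseteq> I"
    proof
      fix i assume "i \<in> {..k}"
      then have "i < N" "l ! k \<le> l ! i"
        using assms nth_le_iff[of k i] unfolding N_def by auto
      with \<open>x \<le> l ! k\<close> show "i \<in> I" unfolding I_def by simp
    qed
    then have "card {..k} \<le> card I" by (rule card_mono[OF fin_I])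
    then show "k < card {y\<in>A. x \<le> y}" using card_eq by simp
  next
    assume "k < card {y\<in>A. x \<le> y}"
    show "x \<le> rev (sorted_list_of_set A) ! k"
    proof (rule ccontr)
      assume "\<not> ?thesis"
      then have "l ! k < x" unfolding l_def by simp
      have "I \<subseteq> {..<k}"
      proof
        fix i assume "i \<in> I"
        then have "i < N" "x \<le> l ! i" unfolding I_def by auto
        with \<open>l ! k < x\<close> have "\<not> l ! i \<le> l ! k" by simp
        then show "i \<in> {..<k}"
          using nth_le_iff[of i k] \<open>i < N\<close> assms unfolding N_def by simp
      qed
      then show False
        using card_mono[of "{..<k}" I] card_eq \<open>k < card {y\<in>A. x \<le> y}\<close> by simp
    qed
  qed
qed

type_synonym lozenge = "int \<times> nat \<times> int \<times> nat"

fun black :: "lozenge \<Rightarrow> int \<times> nat" where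
  "black (x, n, _) = (x, n)"

fun white :: "lozenge \<Rightarrow> int \<times> nat" where
  "white (_, _, w) = w"

definition exactly_one_of :: "bool \<Rightarrow> bool \<Rightarrow> bool \<Rightarrow> bool" where
  "exactly_one_of P Q R \<longleftrightarrow> (P \<or> Q \<or> R) \<and> \<not> (P \<and> Q) \<and> \<not> (P \<and> R) \<and> \<not> (Q \<and> R)"

definition count_from :: "(int \<times> nat) set \<Rightarrow> nat \<Rightarrow> int \<Rightarrow> nat" where
  "count_from S n x = card {y \<in> level S n. x \<le> y}"

definition interlacing_config :: "(nat \<Rightarrow> nat) \<Rightarrow> (int \<times> nat) set \<Rightarrow> bool" where
  "interlacing_config m S \<longleftrightarrow>
     (\<forall>n\<ge>1. finite (level S n) \<and> card (level S n) = m n) \<and> interlacing m S"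

lemma viable_levels: "viable m l \<Longrightarrow> snd (black l) \<ge> 1 \<and> snd (white l) \<ge> 1"
  unfolding viable_def by (cases l) auto

lemma delta_cases: "m n \<le> m (Suc n) \<Longrightarrow> m (Suc n) \<le> m n + 1 \<Longrightarrow> delta m n = 0 \<or> delta m n = 1"
  unfolding delta_def by auto

lemma le_xk_iff_count_from:
  assumes "finite (level S n)" "1 \<le> k" "k \<le> card (level S n)"
  shows "x \<le> xk S n k \<longleftrightarrow> k \<le> count_from S n x"
  using le_nth_rev_sorted_list_of_set_iff[of "level S n" "k - 1" x] assms
  unfolding xk_def count_from_def by auto

lemma count_from_le_card: "finite (level S n) \<Longrightarrow> count_from S n x \<le> card (level S n)"
  unfolding count_from_def by (rule card_mono) auto

lemma count_from_step:
  assumes "finite (level S n)"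
  shows "count_from S n x = count_from S n (x + 1) + (if (x, n) \<in> S then 1 else 0)"
proof -
  have "count_from S n x = card ({y \<in> level S n. x + 1 \<le> y} \<union> ({x} \<inter> level S n))"
    unfolding count_from_def by (rule arg_cong[where f = card]) auto
  also have "\<dots> = count_from S n (x + 1) + card ({x} \<inter> level S n)"
    unfolding count_from_def by (rule card_Un_disjoint) (use assms in auto)
  also have "card ({x} \<inter> level S n) = (if (x, n) \<in> S then 1 else 0)"
    by (auto simp: level_def)
  finally show ?thesis .
qed

lemma typeII_cond_iff_count_from:
  assumes fin: "finite (level S n)" "finite (level S (Suc n))"
    and card: "card (level S n) = m n" "card (level S (Suc n)) = m (Suc n)"
  shows "typeII_cond m S x n \<longleftrightarrow> count_from S n x < count_from S (Suc n) (x + delta m n)"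
proof
  assume "typeII_cond m S x n"
  then obtain k where k: "1 \<le> k" "k \<le> m (Suc n)" "k \<le> m n \<longrightarrow> xk S n k < x"
      "x \<le> xk S (Suc n) k - delta m n"
    unfolding typeII_cond_def by blast
  have "k \<le> count_from S (Suc n) (x + delta m n)"
    using le_xk_iff_count_from[OF fin(2) k(1), of "x + delta m n"] k card by auto
  moreover have "count_from S n x < k"
    using le_xk_iff_count_from[OF fin(1) k(1), of x] count_from_le_card[OF fin(1), of x] k card
    by (cases "k \<le> m n") auto
  ultimately show "count_from S n x < count_from S (Suc n) (x + delta m n)"
    by linarith
next
  assume less: "count_from S n x < count_from S (Suc n) (x + delta m n)"
  define k where "k = count_from S n x + 1"
  have k: "1 \<le> k" "k \<le> count_from S (Suc n) (x + delta m n)" "k \<le> m (Suc n)"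
    using less count_from_le_card[OF fin(2), of "x + delta m n"] card unfolding k_def by auto
  have "x + delta m n \<le> xk S (Suc n) k"
    using le_xk_iff_count_from[OF fin(2) k(1), of "x + delta m n"] k card by auto
  moreover have "k \<le> m n \<longrightarrow> xk S n k < x"
    using le_xk_iff_count_from[OF fin(1) k(1), of x] card unfolding k_def by auto
  ultimately show "typeII_cond m S x n"
    unfolding typeII_cond_def using k by (intro exI[of _ k]) auto
qed

lemma interlacing_config_count_from:
  assumes S: "interlacing_config m S" and n: "n \<ge> 1"
    and m: "m n \<le> m (Suc n)" "m (Suc n) \<le> m n + 1"
  shows "count_from S n x \<le> count_from S (Suc n) (x + delta m n)"
    and "count_from S (Suc n) (x + delta m n) \<le> count_from S n (x + 1) + 1"
proof -
  have fin: "finite (level S n)" "finite (level S (Suc n))"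
    and card: "card (level S n) = m n" "card (level S (Suc n)) = m (Suc n)"
    using S n unfolding interlacing_config_def by auto
  have d: "delta m n = 0 \<or> delta m n = 1"
    using delta_cases[OF m] .
  have il: "(if delta m n = 0 then
           (k \<le> m (Suc n) \<longrightarrow> xk S n k \<le> xk S (Suc n) k) \<and>
           (k + 1 \<le> m (Suc n) \<longrightarrow> xk S (Suc n) (k + 1) < xk S n k)
         else
           (k \<le> m (Suc n) \<longrightarrow> xk S n k < xk S (Suc n) k) \<and>
           (k + 1 \<le> m (Suc n) \<longrightarrow> xk S (Suc n) (k + 1) \<le> xk S n k))"
    if "1 \<le> k" "k \<le> m n" for k
    using S n that unfolding interlacing_config_def interlacing_def by blast
  show "count_from S n x \<le> count_from S (Suc n) (x + delta m n)"
  proof (cases "count_from S n x = 0")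
    case False
    define k where "k = count_from S n x"
    have k: "1 \<le> k" "k \<le> m n" "k \<le> m (Suc n)"
      using False count_from_le_card[OF fin(1), of x] card m unfolding k_def by auto
    have "x \<le> xk S n k"
      using le_xk_iff_count_from[OF fin(1) k(1), of x] k card unfolding k_def by auto
    then have "x + delta m n \<le> xk S (Suc n) k"
      using il[OF k(1,2)] k d by (auto split: if_splits)
    then show ?thesis
      using le_xk_iff_count_from[OF fin(2) k(1), of "x + delta m n"] k card unfolding k_def by auto
  qed simp
  show "count_from S (Suc n) (x + delta m n) \<le> count_from S n (x + 1) + 1"
  proof (cases "count_from S (Suc n) (x + delta m n) \<le> 1")
    case False
    define k where "k = count_from S (Suc n) (x + delta m n) - 1"
    have k: "1 \<le> k" "k + 1 \<le> m (Suc n)" "k \<le> m n"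
      using False count_from_le_card[OF fin(2), of "x + delta m n"] card m unfolding k_def by auto
    have "x + delta m n \<le> xk S (Suc n) (k + 1)"
      using le_xk_iff_count_from[OF fin(2), of "k + 1" "x + delta m n"] k card False
      unfolding k_def by auto
    then have "x + 1 \<le> xk S n k"
      using il[OF k(1,3)] k d by (auto split: if_splits)
    then show ?thesis
      using le_xk_iff_count_from[OF fin(1) k(1), of "x + 1"] k card unfolding k_def by auto
  qed simp
qed

lemma lozenge_present_type_I [simp]: "lozenge_present m S (x, n, x, n) \<longleftrightarrow> (x, n) \<in> S"
  unfolding lozenge_present_def by simp

lemma lozenge_present_type_II [simp]:
  "lozenge_present m S (x, n, x - 1 + delta m n, Suc n) \<longleftrightarrow> (x, n) \<notin> S \<and> typeII_cond m S x n"
  unfolding lozenge_present_def by simp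

lemma lozenge_present_type_III [simp]:
  "lozenge_present m S (x, n, x + delta m n, Suc n) \<longleftrightarrow> (x, n) \<notin> S \<and> \<not> typeII_cond m S x n"
  unfolding lozenge_present_def by simp

lemma lozenges_at_black_partition:
  "exactly_one_of (lozenge_present m S (x, n, x, n))
     (lozenge_present m S (x, n, x - 1 + delta m n, Suc n))
     (lozenge_present m S (x, n, x + delta m n, Suc n))"
  unfolding exactly_one_of_def by auto

lemma lozenges_at_white_partition:
  assumes S: "interlacing_config m S" and n: "n \<ge> 1"
    and m: "m n \<le> m (Suc n)" "m (Suc n) \<le> m n + 1"
  shows "exactly_one_of (lozenge_present m S (y + delta m n, Suc n, y + delta m n, Suc n))
     (lozenge_present m S (y + 1, n, y + delta m n, Suc n))
     (lozenge_present m S (y, n, y + delta m n, Suc n))"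
proof -
  have fin: "finite (level S n)" "finite (level S (Suc n))"
    and card: "card (level S n) = m n" "card (level S (Suc n)) = m (Suc n)"
    using S n unfolding interlacing_config_def by auto
  have "lozenge_present m S (y + 1, n, y + delta m n, Suc n) \<longleftrightarrow>
      (y + 1, n) \<notin> S \<and> typeII_cond m S (y + 1) n"
    using lozenge_present_type_II[of m S "y + 1" n] by simp
  moreover have "count_from S (Suc n) (y + delta m n) =
      count_from S (Suc n) (y + 1 + delta m n) + (if (y + delta m n, Suc n) \<in> S then 1 else 0)"
    using count_from_step[OF fin(2), of "y + delta m n"] by (simp add: add_ac)
  ultimately show ?thesis
    unfolding exactly_one_of_def lozenge_present_type_I lozenge_present_type_III
      typeII_cond_iff_count_from[OF fin card]
    using count_from_step[OF fin(1), of y]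
      count_from_step[OF fin(1), of "y + 1"]
      interlacing_config_count_from[OF S n m, of y] interlacing_config_count_from[OF S n m, of "y + 1"]
    by (auto split: if_splits)
qed

lemma lozenge_present_same_black:
  assumes "viable m l" "viable m l'" "black l = black l'" "l \<noteq> l'"
    and "lozenge_present m S l"
  shows "\<not> lozenge_present m S l'"
proof -
  obtain x n w w' where "l = (x, n, w)" "l' = (x, n, w')"
    using assms(3) by (cases l; cases l') auto
  with assms show ?thesis
    unfolding viable_def lozenge_present_def by (auto split: if_splits)
qed

lemma viable_white_cases:
  assumes "viable m l" "white l = (x', n')"
  shows "l = (x', n', x', n') \<or> (n' \<ge> 2 \<and>
    (l = (x' - delta m (n' - 1) + 1, n' - 1, x', n') \<or> l = (x' - delta m (n' - 1), n' - 1, x', n')))"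
  using assms unfolding viable_def by (cases l) auto

lemma lozenge_present_same_white:
  assumes S: "interlacing_config m S"
    and m: "\<And>n. n \<ge> 1 \<Longrightarrow> m n \<le> m (Suc n) \<and> m (Suc n) \<le> m n + 1"
    and "viable m l" "viable m l'" "white l = white l'" "l \<noteq> l'"
    and "lozenge_present m S l"
  shows "\<not> lozenge_present m S l'"
proof -
  obtain x' n' where w: "white l = (x', n')" by fastforce
  show ?thesis
  proof (cases "n' \<ge> 2")
    case False
    then show ?thesis
      using viable_white_cases[OF assms(3) w] viable_white_cases[of m l' x' n'] assms w by auto
  next
    case True
    define k where "k = n' - 1"
    have k: "k \<ge> 1" "n' = Suc k" using True unfolding k_def by auto
    define y where "y = x' - delta m k"
    have x': "x' = y + delta m k" unfolding y_def by simp
    have "l = (x', n', x', n') \<or> l = (y + 1, k, x', n') \<or> l = (y, k, x', n')"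
      and "l' = (x', n', x', n') \<or> l' = (y + 1, k, x', n') \<or> l' = (y, k, x', n')"
      using viable_white_cases[OF assms(3) w] viable_white_cases[of m l' x' n'] assms w
      unfolding y_def k_def by auto
    with lozenges_at_white_partition[OF S k(1) m[OF k(1), THEN conjunct1] m[OF k(1), THEN conjunct2], of y]
      assms show ?thesis
      unfolding exactly_one_of_def x' k(2) by auto
  qed
qed

lemma eventually_lozenge_present_type_III:
  assumes S: "interlacing_config m S" and n: "n \<ge> 1" and m: "m n \<le> m (Suc n)"
  shows "eventually (\<lambda>x. lozenge_present m S (x, n, x + delta m n, Suc n)) at_top"
proof -
  have fin: "finite (level S n)" "finite (level S (Suc n))"
    and card: "card (level S n) = m n" "card (level S (Suc n)) = m (Suc n)"
    using S n unfolding interlacing_config_def by auto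
  define B where "B = Max (insert 0 (level S n \<union> level S (Suc n))) + 1"
  have above: "y < B" if "y \<in> level S n \<union> level S (Suc n)" for y
    unfolding B_def using fin that by (auto intro: Max_ge le_imp_less_Suc)
  have "lozenge_present m S (x, n, x + delta m n, Suc n)" if "x \<ge> B" for x
  proof -
    have "(x, n) \<notin> S"
      using above[of x] that by (auto simp: level_def)
    moreover have "{y \<in> level S (Suc n). x + delta m n \<le> y} = {}"
      using above that m unfolding delta_def by fastforce
    then have "count_from S (Suc n) (x + delta m n) = 0"
      unfolding count_from_def by (metis card.empty)
    then have "\<not> typeII_cond m S x n"
      using typeII_cond_iff_count_from[OF fin card] by simp
    ultimately show ?thesis by simp
  qed
  then show ?thesis
    unfolding eventually_at_top_linorder by blast
qed

definition admissible :: "(nat \<Rightarrow> nat) \<Rightarrow> int \<Rightarrow> lozenge list \<Rightarrow> bool" where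
  "admissible m L ls \<longleftrightarrow>
     distinct ls \<and> (\<forall>l\<in>set ls. viable m l \<and> fst (black l) > L \<and> fst (white l) > L)"

definition non_particles :: "lozenge list \<Rightarrow> nat" where
  "non_particles ls = length (filter (\<lambda>l. white l \<noteq> black l) ls)"

lemma admissible_Cons:
  "admissible m L (l # r) \<longleftrightarrow>
     l \<notin> set r \<and> viable m l \<and> fst (black l) > L \<and> fst (white l) > L \<and> admissible m L r"
  unfolding admissible_def by auto

lemma non_particles_Cons:
  "non_particles (l # r) = (if white l = black l then non_particles r else Suc (non_particles r))"
  unfolding non_particles_def by simp

lemma admissible_mset: "mset ls = mset ls' \<Longrightarrow> admissible m L ls \<longleftrightarrow> admissible m L ls'"
  unfolding admissible_def by (metis mset_eq_imp_distinct_iff set_mset_mset)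

lemma non_particles_mset: "mset ls = mset ls' \<Longrightarrow> non_particles ls = non_particles ls'"
  unfolding non_particles_def by (simp flip: size_mset)

locale lozenge_relations =
  fixes m :: "nat \<Rightarrow> nat" and L :: int and F :: "lozenge list \<Rightarrow> real"
  assumes counts_mono: "\<And>n. n \<ge> 1 \<Longrightarrow> m n \<le> m (Suc n)"
    and mset_invariant: "\<And>ls ls'. mset ls = mset ls' \<Longrightarrow> F ls = F ls'"
    and same_black_vanish: "\<And>ls l l'. l \<in> set ls \<Longrightarrow> l' \<in> set ls \<Longrightarrow> viable m l \<Longrightarrow> viable m l' \<Longrightarrow>
        l \<noteq> l' \<Longrightarrow> black l = black l' \<Longrightarrow> F ls = 0"
    and same_white_vanish: "\<And>ls l l'. l \<in> set ls \<Longrightarrow> l' \<in> set ls \<Longrightarrow> viable m l \<Longrightarrow> viable m l' \<Longrightarrow>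
        l \<noteq> l' \<Longrightarrow> white l = white l' \<Longrightarrow> F ls = 0"
    and black_relation: "\<And>r x n. admissible m L r \<Longrightarrow> n \<ge> 1 \<Longrightarrow> x > L \<Longrightarrow> (x, n) \<notin> black ` set r \<Longrightarrow>
        F ((x, n, x, n) # r) + F ((x, n, x - 1 + delta m n, Suc n) # r)
          + F ((x, n, x + delta m n, Suc n) # r) = F r"
    and white_relation: "\<And>r y n. admissible m L r \<Longrightarrow> n \<ge> 1 \<Longrightarrow> y > L \<Longrightarrow>
        (y + delta m n, Suc n) \<notin> white ` set r \<Longrightarrow>
        F ((y + delta m n, Suc n, y + delta m n, Suc n) # r) + F ((y + 1, n, y + delta m n, Suc n) # r)
          + F ((y, n, y + delta m n, Suc n) # r) = F r"
    and type_III_limit: "\<And>r n. admissible m L r \<Longrightarrow> n \<ge> 1 \<Longrightarrow>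
        ((\<lambda>x. F ((x, n, x + delta m n, Suc n) # r)) \<longlongrightarrow> F r) at_top"

lemma lozenge_relations_diff:
  assumes F: "lozenge_relations m L F" and G: "lozenge_relations m L G"
  shows "lozenge_relations m L (\<lambda>ls. F ls - G ls)"
proof -
  interpret F: lozenge_relations m L F by (fact F)
  interpret G: lozenge_relations m L G by (fact G)
  show ?thesis
  proof
    show "F ls - G ls = F ls' - G ls'" if "mset ls = mset ls'" for ls ls'
      using that F.mset_invariant G.mset_invariant by metis
    show "F ls - G ls = 0" if "l \<in> set ls" "l' \<in> set ls" "viable m l" "viable m l'" "l \<noteq> l'"
      "black l = black l'" for ls l l'
      using F.same_black_vanish[OF that] G.same_black_vanish[OF that] by simp
    show "F ls - G ls = 0" if "l \<in> set ls" "l' \<in> set ls" "viable m l" "viable m l'" "l \<noteq> l'"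
      "white l = white l'" for ls l l'
      using F.same_white_vanish[OF that] G.same_white_vanish[OF that] by simp
    show "F ((x, n, x, n) # r) - G ((x, n, x, n) # r)
        + (F ((x, n, x - 1 + delta m n, Suc n) # r) - G ((x, n, x - 1 + delta m n, Suc n) # r))
        + (F ((x, n, x + delta m n, Suc n) # r) - G ((x, n, x + delta m n, Suc n) # r)) = F r - G r"
      if "admissible m L r" "n \<ge> 1" "x > L" "(x, n) \<notin> black ` set r" for r x n
      using F.black_relation[OF that] G.black_relation[OF that] by linarith
    show "F ((y + delta m n, Suc n, y + delta m n, Suc n) # r) - G ((y + delta m n, Suc n, y + delta m n, Suc n) # r)
        + (F ((y + 1, n, y + delta m n, Suc n) # r) - G ((y + 1, n, y + delta m n, Suc n) # r))
        + (F ((y, n, y + delta m n, Suc n) # r) - G ((y, n, y + delta m n, Suc n) # r)) = F r - G r"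
      if "admissible m L r" "n \<ge> 1" "y > L" "(y + delta m n, Suc n) \<notin> white ` set r" for r y n
      using F.white_relation[OF that] G.white_relation[OF that] by linarith
    show "((\<lambda>x. F ((x, n, x + delta m n, Suc n) # r) - G ((x, n, x + delta m n, Suc n) # r))
        \<longlongrightarrow> F r - G r) at_top" if "admissible m L r" "n \<ge> 1" for r n
      using that by (intro tendsto_diff F.type_III_limit G.type_III_limit)
  qed (fact F.counts_mono)
qed

context lozenge_relations
begin

lemma delta_nonneg: "n \<ge> 1 \<Longrightarrow> delta m n \<ge> 0"
  using counts_mono unfolding delta_def by fastforce

context
  fixes r :: "lozenge list"
  assumes IH: "\<And>ls. admissible m L ls \<Longrightarrow> non_particles ls \<le> non_particles r \<Longrightarrow> F ls = 0"
    and r: "admissible m L r"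
begin

lemma vanishes_particle_Cons:
  assumes "x > L" "n \<ge> 1" "(x, n, x, n) \<notin> set r"
  shows "F ((x, n, x, n) # r) = 0"
  using assms r by (intro IH) (auto simp: admissible_Cons non_particles_Cons viable_def)

lemma type_III_shift:
  assumes n: "n \<ge> 1" and x: "x > L" and free: "(x, n) \<notin> black ` set r"
    and nonzero: "F ((x, n, x + delta m n, Suc n) # r) \<noteq> 0"
  shows "(x + 1, n) \<notin> black ` set r \<and>
    F ((x + 1, n, x + 1 + delta m n, Suc n) # r) = F ((x, n, x + delta m n, Suc n) # r)"
proof -
  have viable: "viable m (x', n, x' + delta m n, Suc n)" "viable m (x', n, x' - 1 + delta m n, Suc n)"
    for x' using n unfolding viable_def by auto
  have free_white: "(x + delta m n, Suc n) \<notin> white ` set r"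
  proof
    assume "(x + delta m n, Suc n) \<in> white ` set r"
    then obtain l where l: "l \<in> set r" "white l = (x + delta m n, Suc n)" by auto
    have "F ((x, n, x + delta m n, Suc n) # r) = 0"
    proof (rule same_white_vanish[of "(x, n, x + delta m n, Suc n)" _ l])
      show "(x, n, x + delta m n, Suc n) \<noteq> l"
        using l(1) free by force
    qed (use l r viable in \<open>auto simp: admissible_def\<close>)
    with nonzero show False ..
  qed
  have "x + delta m n > L"
    using x delta_nonneg[OF n] by linarith
  then have "F ((x + delta m n, Suc n, x + delta m n, Suc n) # r) = 0"
    using free_white n by (intro vanishes_particle_Cons) (auto simp: image_iff)
  with white_relation[OF r n x free_white] IH[OF r]
  have type_II: "F ((x + 1, n, x + delta m n, Suc n) # r) = - F ((x, n, x + delta m n, Suc n) # r)"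
    by simp
  have free_succ: "(x + 1, n) \<notin> black ` set r"
  proof
    assume "(x + 1, n) \<in> black ` set r"
    then obtain l where l: "l \<in> set r" "black l = (x + 1, n)" by auto
    have "F ((x + 1, n, x + delta m n, Suc n) # r) = 0"
    proof (rule same_black_vanish[of "(x + 1, n, x + delta m n, Suc n)" _ l])
      show "(x + 1, n, x + delta m n, Suc n) \<noteq> l"
        using l(1) free_white by force
      show "viable m (x + 1, n, x + delta m n, Suc n)"
        using viable(2)[of "x + 1"] by simp
    qed (use l r in \<open>auto simp: admissible_def\<close>)
    with type_II nonzero show False by simp
  qed
  have "F ((x + 1, n, x + 1, n) # r) = 0"
    using free_succ x n by (intro vanishes_particle_Cons) (auto simp: image_iff)
  with black_relation[OF r n _ free_succ] x IH[OF r] type_II free_succ show ?thesis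
    by (simp add: add.commute add.left_commute)
qed

lemma vanishes_type_III:
  assumes n: "n \<ge> 1" and x0: "x0 > L" and free: "(x0, n) \<notin> black ` set r"
  shows "F ((x0, n, x0 + delta m n, Suc n) # r) = 0"
proof (rule ccontr)
  define G where "G x = F ((x, n, x + delta m n, Suc n) # r)" for x
  assume "F ((x0, n, x0 + delta m n, Suc n) # r) \<noteq> 0"
  then have G_x0: "G x0 \<noteq> 0"
    unfolding G_def .
  have "(x, n) \<notin> black ` set r \<and> G x = G x0" if "x \<ge> x0" for x
    using that
  proof (induction x rule: int_ge_induct)
    case (step x)
    with x0 G_x0 type_III_shift[OF n, of x] show ?case
      unfolding G_def by (simp add: add.commute add.left_commute)
  qed (use free in simp)
  then have "eventually (\<lambda>x. G x = G x0) at_top"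
    unfolding eventually_at_top_linorder by blast
  then have "(G \<longlongrightarrow> G x0) at_top"
    by (rule tendsto_eventually)
  moreover have "(G \<longlongrightarrow> 0) at_top"
    using type_III_limit[OF r n] IH[OF r] unfolding G_def by simp
  ultimately have "G x0 = 0"
    by (rule tendsto_unique[OF trivial_limit_at_top_linorder])
  with G_x0 show False ..
qed

lemma vanishes_type_II:
  assumes n: "n \<ge> 1" and x: "x > L" and free: "(x, n) \<notin> black ` set r"
  shows "F ((x, n, x - 1 + delta m n, Suc n) # r) = 0"
  using black_relation[OF r n x free] vanishes_type_III[OF n x free] IH[OF r]
    vanishes_particle_Cons[OF x n] free by (force simp: image_iff)

end

theorem vanishes_if_vanishes_on_particles:
  assumes base: "\<And>ls. admissible m L ls \<Longrightarrow> \<forall>l\<in>set ls. white l = black l \<Longrightarrow> F ls = 0"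
  shows "admissible m L ls \<Longrightarrow> F ls = 0"
proof (induction "non_particles ls" arbitrary: ls rule: less_induct)
  case less
  show ?case
  proof (cases "\<forall>l\<in>set ls. white l = black l")
    case True
    with base less.prems show ?thesis .
  next
    case False
    then obtain l where l: "l \<in> set ls" "white l \<noteq> black l" by blast
    define r where "r = remove1 l ls"
    have mset_eq: "mset (l # r) = mset ls"
      unfolding r_def using l(1) by simp
    then have F_eq: "F ls = F (l # r)"
      using mset_invariant by metis
    have adm: "admissible m L (l # r)"
      using admissible_mset[OF mset_eq] less.prems by simp
    then have r: "admissible m L r"
      by (simp add: admissible_Cons)
    have IH: "F ls' = 0" if "admissible m L ls'" "non_particles ls' \<le> non_particles r" for ls'
      using less.hyps that non_particles_mset[OF mset_eq] l(2)
      by (simp add: non_particles_Cons)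
    obtain x n w where l_eq: "l = (x, n, w)" by (cases l) auto
    have n: "n \<ge> 1" and x: "x > L"
      and w: "w = (x - 1 + delta m n, Suc n) \<or> w = (x + delta m n, Suc n)"
      using adm l(2) unfolding l_eq admissible_Cons viable_def by auto
    show ?thesis
    proof (cases "(x, n) \<in> black ` set r")
      case True
      then obtain l' where "l' \<in> set r" "black l' = (x, n)" by auto
      with adm have "F (l # r) = 0"
        unfolding l_eq admissible_Cons admissible_def
        by (intro same_black_vanish[of l _ l']) (auto simp: l_eq)
      with F_eq show ?thesis by simp
    next
      case False
      with w vanishes_type_II[OF IH r n x] vanishes_type_III[OF IH r n x] F_eq show ?thesis
        unfolding l_eq by auto
    qed
  qed
qed

end

lemma det_permute_rows_cols:
  fixes A :: "'a::comm_ring_1 mat"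
  assumes A: "A \<in> carrier_mat n n" and p: "p permutes {..<n}"
  shows "det (mat n n (\<lambda>(i, j). A $$ (p i, p j))) = det A"
proof -
  have p': "p permutes {0..<n}"
    using p by (simp add: lessThan_atLeast0)
  define B where "B = mat n n (\<lambda>(i, j). A $$ (i, p j))"
  have B: "B \<in> carrier_mat n n"
    unfolding B_def by simp
  have "mat n n (\<lambda>(i, j). A $$ (p i, p j)) = mat n n (\<lambda>(i, j). B $$ (p i, j))"
    unfolding B_def using permutes_in_image[OF p] by (intro eq_matI) auto
  then have "det (mat n n (\<lambda>(i, j). A $$ (p i, p j))) = signof p * det B"
    using det_permute_rows[OF B p'] by simp
  moreover have "B\<^sup>T = mat n n (\<lambda>(i, j). A\<^sup>T $$ (p i, j))"
    unfolding B_def using permutes_in_image[OF p] A by (intro eq_matI) auto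
  then have "det B = signof p * det A"
    using det_transpose[OF B] det_permute_rows[of "A\<^sup>T" n p] p' A det_transpose[OF A] by auto
  moreover have "signof p * signof p = (1::'a)"
    by (simp add: sign_def)
  ultimately show ?thesis
    by (metis mult.assoc mult_1)
qed

definition kernel_mat :: "('b \<Rightarrow> 'w \<Rightarrow> 'a) \<Rightarrow> 'b list \<Rightarrow> 'w list \<Rightarrow> 'a mat" where
  "kernel_mat k bs ws = mat (length bs) (length bs) (\<lambda>(i, j). k (bs ! i) (ws ! j))"

lemma kernel_mat_carrier: "kernel_mat k bs ws \<in> carrier_mat (length bs) (length bs)"
  unfolding kernel_mat_def by simp

lemma kernel_mat_dims [simp]:
  "dim_row (kernel_mat k bs ws) = length bs" "dim_col (kernel_mat k bs ws) = length bs"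
  unfolding kernel_mat_def by simp_all

lemma kernel_mat_index [simp]:
  "i < length bs \<Longrightarrow> j < length bs \<Longrightarrow> kernel_mat k bs ws $$ (i, j) = k (bs ! i) (ws ! j)"
  unfolding kernel_mat_def by simp

lemma det_kernel_mat_swap:
  fixes k :: "'b \<Rightarrow> 'w \<Rightarrow> 'a::comm_ring_1"
  assumes "length ws = length bs"
  shows "det (kernel_mat k bs ws) = det (kernel_mat (\<lambda>w b. k b w) ws bs)"
proof -
  have "(kernel_mat k bs ws)\<^sup>T = kernel_mat (\<lambda>w b. k b w) ws bs"
    using assms by (intro eq_matI) auto
  then show ?thesis
    using det_transpose[OF kernel_mat_carrier] by metis
qed

lemma det_kernel_mat_permute:
  fixes k :: "'b \<Rightarrow> 'w \<Rightarrow> 'a::comm_ring_1"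
  assumes p: "p permutes {..<length bs}" and len: "length ws = length bs"
  shows "det (kernel_mat k (permute_list p bs) (permute_list p ws)) = det (kernel_mat k bs ws)"
proof -
  have "kernel_mat k (permute_list p bs) (permute_list p ws) =
      mat (length bs) (length bs) (\<lambda>(i, j). kernel_mat k bs ws $$ (p i, p j))"
    using p len permutes_in_image[OF p] by (intro eq_matI) (auto simp: permute_list_nth)
  then show ?thesis
    using det_permute_rows_cols[OF kernel_mat_carrier p] by simp
qed

lemma det_kernel_mat_equal_rows:
  fixes k :: "'b \<Rightarrow> 'w \<Rightarrow> 'a::comm_ring_1"
  assumes "i < length bs" "j < length bs" "i \<noteq> j" "bs ! i = bs ! j"
  shows "det (kernel_mat k bs ws) = 0"
  using assms by (intro det_identical_rows[OF kernel_mat_carrier, of i j]) (auto intro: eq_vecI)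

lemma det_kernel_mat_conjugate:
  fixes k :: "'b \<Rightarrow> 'b \<Rightarrow> 'a::field"
  assumes c: "\<forall>b\<in>set bs. c b \<noteq> 0"
  shows "det (kernel_mat (\<lambda>b b'. c b / c b' * k b b') bs bs) = det (kernel_mat k bs bs)"
proof -
  let ?n = "length bs"
  have prod_c: "(\<Prod>i = 0..<?n. c (bs ! i)) \<noteq> 0"
    using c by (simp add: prod_zero_iff)
  have "(\<Prod>i = 0..<?n. c (bs ! i) / c (bs ! p i) * k (bs ! i) (bs ! p i)) =
      (\<Prod>i = 0..<?n. k (bs ! i) (bs ! p i))" if p: "p permutes {0..<?n}" for p
  proof -
    have "(\<Prod>i = 0..<?n. c (bs ! p i)) = (\<Prod>i = 0..<?n. c (bs ! i))"
      using prod.permute[OF p, of "\<lambda>i. c (bs ! i)"] by (simp add: comp_def)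
    then show ?thesis
      using prod_c by (simp add: prod.distrib prod_dividef)
  qed
  then show ?thesis
    unfolding det_def'[OF kernel_mat_carrier] by (intro sum.cong) (auto simp: permutes_in_image)
qed

lemma det_kernel_mat_first_column_sum:
  fixes k :: "'b \<Rightarrow> 'w \<Rightarrow> 'a::comm_ring_1"
  assumes len: "length ws = length bs"
    and first: "k b w1 + k b w2 + k b w3 = 1"
    and others: "\<forall>b'\<in>set bs. k b' w1 + k b' w2 + k b' w3 = 0"
  shows "det (kernel_mat k (b # bs) (w1 # ws)) + det (kernel_mat k (b # bs) (w2 # ws))
      + det (kernel_mat k (b # bs) (w3 # ws)) = det (kernel_mat k bs ws)"
proof -
  let ?A = "\<lambda>w. kernel_mat k (b # bs) (w # ws)"
  have cof: "cofactor (?A w) i 0 = cofactor (?A w1) i 0" for w i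
    unfolding cofactor_def by (rule arg_cong[where f = "\<lambda>M. _ * det M"]) (auto intro!: eq_matI simp: mat_delete_def)
  have laplace: "det (?A w) = (\<Sum>i<Suc (length bs). k ((b # bs) ! i) w * cofactor (?A w1) i 0)" for w
  proof -
    have "det (?A w) = (\<Sum>i<Suc (length bs). ?A w $$ (i, 0) * cofactor (?A w) i 0)"
      by (rule laplace_expansion_column[OF kernel_mat_carrier[of k "b # bs" "w # ws", unfolded length_Cons]]) simp
    also have "\<dots> = (\<Sum>i<Suc (length bs). k ((b # bs) ! i) w * cofactor (?A w1) i 0)"
      by (intro sum.cong) (simp_all add: cof[of w])
    finally show ?thesis .
  qed
  have "det (?A w1) + det (?A w2) + det (?A w3) =
      (\<Sum>i<Suc (length bs). (k ((b # bs) ! i) w1 + k ((b # bs) ! i) w2 + k ((b # bs) ! i) w3)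
        * cofactor (?A w1) i 0)"
    unfolding laplace by (simp add: sum.distrib algebra_simps)
  also have "\<dots> = cofactor (?A w1) 0 0"
  proof -
    have "(\<Sum>i<length bs. (k (bs ! i) w1 + k (bs ! i) w2 + k (bs ! i) w3) * cofactor (?A w1) (Suc i) 0) = 0"
      using others by (intro sum.neutral) simp
    then show ?thesis
      unfolding sum.lessThan_Suc_shift using first by simp
  qed
  also have "\<dots> = det (kernel_mat k bs ws)"
  proof -
    have "mat_delete (?A w1) 0 0 = kernel_mat k bs ws"
      using len by (intro eq_matI) (auto simp: mat_delete_def)
    then show ?thesis
      unfolding cofactor_def by simp
  qed
  finally show ?thesis .
qed

lemma det_kernel_mat_first_row_sum:
  fixes k :: "'b \<Rightarrow> 'w \<Rightarrow> 'a::comm_ring_1"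
  assumes len: "length ws = length bs"
    and first: "k b1 w + k b2 w + k b3 w = 1"
    and others: "\<forall>w'\<in>set ws. k b1 w' + k b2 w' + k b3 w' = 0"
  shows "det (kernel_mat k (b1 # bs) (w # ws)) + det (kernel_mat k (b2 # bs) (w # ws))
      + det (kernel_mat k (b3 # bs) (w # ws)) = det (kernel_mat k bs ws)"
proof -
  have "det (kernel_mat k (b # bs) (w # ws)) = det (kernel_mat (\<lambda>w b. k b w) (w # ws) (b # bs))" for b
    using len by (intro det_kernel_mat_swap) simp
  moreover have "det (kernel_mat k bs ws) = det (kernel_mat (\<lambda>w b. k b w) ws bs)"
    using len by (rule det_kernel_mat_swap)
  ultimately show ?thesis
    using det_kernel_mat_first_column_sum[of bs ws "\<lambda>w b. k b w" w b1 b2 b3] first others len by simp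
qed

lemma det_kernel_mat_Cons_expansion:
  fixes k :: "'b \<Rightarrow> 'w \<Rightarrow> 'a::comm_ring_1"
  assumes len: "length ws = length bs"
  obtains c where "\<And>b w. det (kernel_mat k (b # bs) (w # ws)) =
      k b w * det (kernel_mat k bs ws)
      + (\<Sum>j<length bs. \<Sum>i<length bs. c i j * (k b (ws ! j) * k (bs ! i) w))"
proof
  let ?A = "\<lambda>b w. kernel_mat k (b # bs) (w # ws)"
  let ?B = "\<lambda>b w j. mat_delete (?A b w) 0 (Suc j)"
  (* Expanding along row 0 and then column 0 of each minor; the remaining cofactors involve
     neither b nor w. *)
  define c where "c i j = (-1) ^ Suc j * cofactor (?B undefined undefined j) i 0" for i j
  fix b w
  have minor: "det (?B b w j) = (\<Sum>i<length bs. k (bs ! i) w * cofactor (?B undefined undefined j) i 0)"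
    if j: "j < length bs" for j
  proof -
    have carrier: "?B b w j \<in> carrier_mat (length bs) (length bs)"
      using mat_delete_carrier[OF kernel_mat_carrier[of k "b # bs" "w # ws"]] by simp
    have cof: "cofactor (?B b w j) i 0 = cofactor (?B undefined undefined j) i 0" for i
      unfolding cofactor_def using len j
      by (rule_tac arg_cong[where f = "\<lambda>M. _ * det M"]) (auto intro!: eq_matI simp: mat_delete_def)
    have entry: "?B b w j $$ (i, 0) = k (bs ! i) w" if "i < length bs" for i
      using that len by (cases bs) (simp_all add: mat_delete_def)
    have "det (?B b w j) = (\<Sum>i<length bs. ?B b w j $$ (i, 0) * cofactor (?B b w j) i 0)"
      by (rule laplace_expansion_column[OF carrier]) (use j in linarith)
    also have "\<dots> = (\<Sum>i<length bs. k (bs ! i) w * cofactor (?B undefined undefined j) i 0)"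
      by (intro sum.cong) (simp_all add: entry cof)
    finally show ?thesis .
  qed
  have "det (?A b w) = (\<Sum>j<Suc (length bs). ?A b w $$ (0, j) * cofactor (?A b w) 0 j)"
    using laplace_expansion_row[OF kernel_mat_carrier, of 0 "b # bs"] by simp
  also have "\<dots> = k b w * det (kernel_mat k bs ws)
      + (\<Sum>j<length bs. k b (ws ! j) * ((-1) ^ Suc j * det (?B b w j)))"
  proof -
    have "mat_delete (?A b w) 0 0 = kernel_mat k bs ws"
      using len by (intro eq_matI) (auto simp: mat_delete_def)
    then show ?thesis
      unfolding sum.lessThan_Suc_shift cofactor_def by simp
  qed
  also have "\<dots> = k b w * det (kernel_mat k bs ws)
      + (\<Sum>j<length bs. \<Sum>i<length bs. c i j * (k b (ws ! j) * k (bs ! i) w))"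
    unfolding c_def by (simp add: minor sum_distrib_left algebra_simps)
  finally show "det (?A b w) = \<dots>" .
qed

lemma tendsto_det_kernel_mat_Cons:
  fixes k :: "'b \<Rightarrow> 'w \<Rightarrow> real"
  assumes len: "length ws = length bs"
    and diagonal: "((\<lambda>x. k (b x) (w x)) \<longlongrightarrow> 1) F"
    and products: "\<And>i j. i < length bs \<Longrightarrow> j < length bs \<Longrightarrow>
        ((\<lambda>x. k (b x) (ws ! j) * k (bs ! i) (w x)) \<longlongrightarrow> 0) F"
  shows "((\<lambda>x. det (kernel_mat k (b x # bs) (w x # ws))) \<longlongrightarrow> det (kernel_mat k bs ws)) F"
proof -
  obtain c where c: "\<And>b w. det (kernel_mat k (b # bs) (w # ws)) =
      k b w * det (kernel_mat k bs ws)
      + (\<Sum>j<length bs. \<Sum>i<length bs. c i j * (k b (ws ! j) * k (bs ! i) w))"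
    using det_kernel_mat_Cons_expansion[OF len] by blast
  have "((\<lambda>x. k (b x) (w x) * det (kernel_mat k bs ws)
      + (\<Sum>j<length bs. \<Sum>i<length bs. c i j * (k (b x) (ws ! j) * k (bs ! i) (w x))))
      \<longlongrightarrow> 1 * det (kernel_mat k bs ws) + (\<Sum>j<length bs. \<Sum>i<length bs. c i j * 0)) F"
    by (intro tendsto_intros diagonal products) auto
  then show ?thesis
    unfolding c by simp
qed

definition lozenge_det :: "(int \<times> nat \<Rightarrow> int \<times> nat \<Rightarrow> real) \<Rightarrow> lozenge list \<Rightarrow> real" where
  "lozenge_det k ls = det (kernel_mat k (map black ls) (map white ls))"

lemma admissible_memD:
  assumes "admissible m L ls" "l \<in> set ls"
  obtains x n x' n' where "black l = (x, n)" "white l = (x', n')" "x > L" "x' > L" "n \<ge> 1" "n' \<ge> 1"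
  using assms viable_levels[of m l] unfolding admissible_def
  by (metis prod.collapse)

locale lozenge_kernel =
  fixes m :: "nat \<Rightarrow> nat" and L :: int and k :: "int \<times> nat \<Rightarrow> int \<times> nat \<Rightarrow> real"
  assumes counts_mono: "\<And>n. n \<ge> 1 \<Longrightarrow> m n \<le> m (Suc n)"
    and black_sum: "\<And>x n x' n'. n \<ge> 1 \<Longrightarrow> n' \<ge> 1 \<Longrightarrow> x \<ge> L \<Longrightarrow> x' \<ge> L \<Longrightarrow>
        k (x, n) (x', n') + k (x, n) (x' - 1 + delta m n', Suc n') + k (x, n) (x' + delta m n', Suc n')
        = (if (x, n) = (x', n') then 1 else 0)"
    and white_sum: "\<And>x n x' n'. n \<ge> 2 \<Longrightarrow> n' \<ge> 1 \<Longrightarrow> x \<ge> L \<Longrightarrow> x' \<ge> L \<Longrightarrow>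
        k (x, n) (x', n') + k (x + 1 - delta m (n - 1), n - 1) (x', n')
          + k (x - delta m (n - 1), n - 1) (x', n')
        = (if (x, n) = (x', n') then 1 else 0)"
    and products_vanish: "\<And>n n' n'' x' x''. n \<ge> 1 \<Longrightarrow> n' \<ge> 1 \<Longrightarrow> n'' \<ge> 1 \<Longrightarrow> x' > L \<Longrightarrow> x'' > L \<Longrightarrow>
        ((\<lambda>x. k (x, n) (x', n') * k (x'', n'') (x + delta m n, Suc n)) \<longlongrightarrow> 0) at_top"
    and diagonal_limit: "\<And>n. n \<ge> 1 \<Longrightarrow> ((\<lambda>x. k (x, n) (x + delta m n, Suc n)) \<longlongrightarrow> 1) at_top"
begin

lemma lozenge_det_equal_blacks:
  assumes "l \<in> set ls" "l' \<in> set ls" "l \<noteq> l'" "black l = black l'"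
  shows "lozenge_det k ls = 0"
proof -
  obtain i j where "i < length ls" "j < length ls" "ls ! i = l" "ls ! j = l'"
    using assms(1,2) by (metis in_set_conv_nth)
  with assms(3,4) show ?thesis
    unfolding lozenge_det_def by (intro det_kernel_mat_equal_rows[of i _ j]) auto
qed

lemma lozenge_det_equal_whites:
  assumes "l \<in> set ls" "l' \<in> set ls" "l \<noteq> l'" "white l = white l'"
  shows "lozenge_det k ls = 0"
proof -
  obtain i j where "i < length ls" "j < length ls" "ls ! i = l" "ls ! j = l'"
    using assms(1,2) by (metis in_set_conv_nth)
  with assms(3,4) show ?thesis
    unfolding lozenge_det_def
    by (subst det_kernel_mat_swap) (auto intro!: det_kernel_mat_equal_rows[of i _ j])
qed

lemma lozenge_det_black_relation:
  assumes r: "admissible m L r" and n: "n \<ge> 1" and x: "x > L" and free: "(x, n) \<notin> black ` set r"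
  shows "lozenge_det k ((x, n, x, n) # r) + lozenge_det k ((x, n, x - 1 + delta m n, Suc n) # r)
      + lozenge_det k ((x, n, x + delta m n, Suc n) # r) = lozenge_det k r"
proof -
  have "k b (x, n) + k b (x - 1 + delta m n, Suc n) + k b (x + delta m n, Suc n) = 0"
    if b: "b \<in> set (map black r)" for b
  proof -
    obtain l where l: "l \<in> set r" "b = black l"
      using b by auto
    with r obtain x'' n'' where "b = (x'', n'')" "x'' > L" "n'' \<ge> 1"
      by (auto elim: admissible_memD)
    with free l n x show ?thesis
      using black_sum[of n'' n x'' x] by force
  qed
  then show ?thesis
    unfolding lozenge_det_def using black_sum[of n n x x] n x
    by (simp add: det_kernel_mat_first_column_sum)
qed

lemma lozenge_det_white_relation:
  assumes r: "admissible m L r" and n: "n \<ge> 1" and y: "y > L"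
    and free: "(y + delta m n, Suc n) \<notin> white ` set r"
  shows "lozenge_det k ((y + delta m n, Suc n, y + delta m n, Suc n) # r)
      + lozenge_det k ((y + 1, n, y + delta m n, Suc n) # r)
      + lozenge_det k ((y, n, y + delta m n, Suc n) # r) = lozenge_det k r"
proof -
  have y': "y + delta m n \<ge> L"
    using y counts_mono[OF n] unfolding delta_def by linarith
  have sum: "k (y + delta m n, Suc n) w + k (y + 1, n) w + k (y, n) w
      = (if (y + delta m n, Suc n) = w then 1 else 0)" if "fst w \<ge> L" "snd w \<ge> 1" for w
    using white_sum[of "Suc n" "snd w" "y + delta m n" "fst w"] that y' n by simp
  have "k (y + delta m n, Suc n) w + k (y + 1, n) w + k (y, n) w = 0"
    if w: "w \<in> set (map white r)" for w
  proof -
    obtain l where l: "l \<in> set r" "w = white l"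
      using w by auto
    with r obtain x' n' where "w = (x', n')" "x' > L" "n' \<ge> 1"
      by (auto elim: admissible_memD)
    with free l sum[of w] show ?thesis
      by force
  qed
  then show ?thesis
    unfolding lozenge_det_def using sum[of "(y + delta m n, Suc n)"] y'
    by (simp add: det_kernel_mat_first_row_sum)
qed

lemma tendsto_lozenge_det_type_III:
  assumes r: "admissible m L r" and n: "n \<ge> 1"
  shows "((\<lambda>x. lozenge_det k ((x, n, x + delta m n, Suc n) # r)) \<longlongrightarrow> lozenge_det k r) at_top"
proof -
  have "((\<lambda>x. k (x, n) (map white r ! j) * k (map black r ! i) (x + delta m n, Suc n)) \<longlongrightarrow> 0) at_top"
    if i: "i < length r" and j: "j < length r" for i j
  proof -
    obtain x' n' where "white (r ! j) = (x', n')" "x' > L" "n' \<ge> 1"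
      using r nth_mem[OF j] by (auto elim: admissible_memD)
    moreover obtain x'' n'' where "black (r ! i) = (x'', n'')" "x'' > L" "n'' \<ge> 1"
      using r nth_mem[OF i] by (auto elim: admissible_memD)
    ultimately show ?thesis
      using products_vanish[OF n, of n' n'' x' x''] i j by simp
  qed
  then show ?thesis
    unfolding lozenge_det_def
    by (auto intro!: tendsto_det_kernel_mat_Cons[where b = "\<lambda>x. (x, n)"] diagonal_limit[OF n])
qed

sublocale lozenge_relations m L "lozenge_det k"
proof
  show "m n \<le> m (Suc n)" if "n \<ge> 1" for n
    using that by (rule counts_mono)
  show "lozenge_det k ls = lozenge_det k ls'" if eq: "mset ls = mset ls'" for ls ls'
  proof -
    obtain p where p: "p permutes {..<length ls'}" "permute_list p ls' = ls"
      using mset_eq_permutation[OF eq] by blast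
    then show ?thesis
      unfolding lozenge_det_def
      using det_kernel_mat_permute[of p "map black ls'" "map white ls'" k] by (simp add: permute_list_map)
  qed
  show "lozenge_det k ls = 0" if "l \<in> set ls" "l' \<in> set ls" "viable m l" "viable m l'" "l \<noteq> l'"
    "black l = black l'" for ls l l'
    using that(1,2,5,6) by (rule lozenge_det_equal_blacks)
  show "lozenge_det k ls = 0" if "l \<in> set ls" "l' \<in> set ls" "viable m l" "viable m l'" "l \<noteq> l'"
    "white l = white l'" for ls l l'
    using that(1,2,5,6) by (rule lozenge_det_equal_whites)
qed (rule lozenge_det_black_relation lozenge_det_white_relation tendsto_lozenge_det_type_III; assumption)+

end

lemma (in finite_measure) measure_split_three_AE:
  assumes sets: "B \<in> sets M" "A1 \<in> sets M" "A2 \<in> sets M" "A3 \<in> sets M"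
    and AE_one: "AE \<omega> in M. \<omega> \<in> B \<longrightarrow> exactly_one_of (\<omega> \<in> A1) (\<omega> \<in> A2) (\<omega> \<in> A3)"
  shows "measure M (B \<inter> A1) + measure M (B \<inter> A2) + measure M (B \<inter> A3) = measure M B"
proof -
  have fmeas: "B \<inter> A \<in> fmeasurable M" if "A \<in> sets M" for A
    using sets(1) that by (simp add: fmeasurable_eq_sets)
  have "measure M B = measure M ((B \<inter> A1 \<union> B \<inter> A2) \<union> B \<inter> A3)"
    using AE_one sets by (intro measure_eq_AE) (auto simp: exactly_one_of_def)
  also have "\<dots> = measure M (B \<inter> A1 \<union> B \<inter> A2) + measure M (B \<inter> A3)"
    using AE_one sets fmeas by (intro measure_Un_AE) (auto elim!: eventually_mono simp: exactly_one_of_def)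
  also have "measure M (B \<inter> A1 \<union> B \<inter> A2) = measure M (B \<inter> A1) + measure M (B \<inter> A2)"
    using AE_one sets fmeas by (intro measure_Un_AE) (auto elim!: eventually_mono simp: exactly_one_of_def)
  finally show ?thesis ..
qed

lemma sorted_list_of_set_eq_iff:
  "sorted_list_of_set A = xs \<longleftrightarrow>
     A = set xs \<and> sorted_list_of_set (set xs) = xs \<or> infinite A \<and> xs = []"
  by (cases "finite A") auto

locale interlacing_process = prob_space M
  for M :: "'a measure" +
  fixes X :: "'a \<Rightarrow> (int \<times> nat) set" and m :: "nat \<Rightarrow> nat"
  assumes particle_measurable: "\<And>p. {\<omega> \<in> space M. p \<in> X \<omega>} \<in> sets M"
    and counts_mono: "\<And>n. n \<ge> 1 \<Longrightarrow> m n \<le> m (Suc n) \<and> m (Suc n) \<le> m n + 1"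
    and AE_interlacing_config: "AE \<omega> in M. interlacing_config m (X \<omega>)"
begin

lemma level_eq_measurable: "{\<omega> \<in> space M. level (X \<omega>) n = A} \<in> sets M"
proof -
  have "{\<omega> \<in> space M. level (X \<omega>) n = A} = {\<omega> \<in> space M. \<forall>y. (y, n) \<in> X \<omega> \<longleftrightarrow> y \<in> A}"
    by (auto simp: level_def)
  also have "\<dots> \<in> sets M"
  proof (rule sets.sets_Collect_countable_All)
    fix y
    show "{\<omega> \<in> space M. (y, n) \<in> X \<omega> \<longleftrightarrow> y \<in> A} \<in> sets M"
      using particle_measurable[of "(y, n)"] by (cases "y \<in> A") (simp_all add: sets.sets_Collect_neg)
  qed
  finally show ?thesis .
qed

lemma finite_level_measurable: "{\<omega> \<in> space M. finite (level (X \<omega>) n)} \<in> sets M"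
proof -
  have "{\<omega> \<in> space M. finite (level (X \<omega>) n)} = {\<omega> \<in> space M. \<exists>A\<in>Collect finite. level (X \<omega>) n = A}"
    by auto
  also have "\<dots> \<in> sets M"
    by (intro sets.sets_Collect_countable_Ex' level_eq_measurable countable_Collect_finite)
  finally show ?thesis .
qed

(* Off a null set the levels are finite, but measurability must also cover infinite levels,
   where sorted_list_of_set returns []. *)
lemma sorted_level_eq_measurable:
  "{\<omega> \<in> space M. sorted_list_of_set (level (X \<omega>) n) = xs} \<in> sets M"
proof -
  have "{\<omega> \<in> space M. sorted_list_of_set (level (X \<omega>) n) = xs} =
      {\<omega> \<in> space M. level (X \<omega>) n = set xs \<and> sorted_list_of_set (set xs) = xs}
      \<union> {\<omega> \<in> space M. \<not> finite (level (X \<omega>) n) \<and> xs = []}"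
    using sorted_list_of_set_eq_iff by blast
  also have "\<dots> \<in> sets M"
    using level_eq_measurable finite_level_measurable
    by (intro sets.Un sets.sets_Collect_conj sets.sets_Collect_neg sets.sets_Collect_const)
  finally show ?thesis .
qed

lemma typeII_cond_measurable: "{\<omega> \<in> space M. typeII_cond m (X \<omega>) x n} \<in> sets M"
proof -
  define Q where "Q = (\<lambda>(xs, ys). \<exists>k. 1 \<le> k \<and> k \<le> m (Suc n) \<and>
      (k \<le> m n \<longrightarrow> rev xs ! (k - 1) < x) \<and> x \<le> rev ys ! (k - 1) - delta m n)"
  have "{\<omega> \<in> space M. typeII_cond m (X \<omega>) x n} = {\<omega> \<in> space M. \<exists>v :: int list \<times> int list.
      (sorted_list_of_set (level (X \<omega>) n), sorted_list_of_set (level (X \<omega>) (Suc n))) = v \<and> Q v}"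
    unfolding typeII_cond_def xk_def Q_def by auto
  also have "\<dots> \<in> sets M"
    using sorted_level_eq_measurable
    by (intro sets.sets_Collect_countable_Ex sets.sets_Collect_conj sets.sets_Collect_const)
      (auto simp: prod_eq_iff intro: sets.sets_Collect_conj)
  finally show ?thesis .
qed

lemma lozenge_present_measurable: "{\<omega> \<in> space M. lozenge_present m (X \<omega>) l} \<in> sets M"
proof -
  obtain x n x' n' where "l = (x, n, x', n')"
    by (cases l) auto
  then show ?thesis
    unfolding lozenge_present_def
    using particle_measurable[of "(x, n)"] typeII_cond_measurable[of x n]
    by (auto intro!: sets.sets_Collect_conj sets.sets_Collect_neg)
qed

definition lozenge_event :: "lozenge list \<Rightarrow> 'a set" where
  "lozenge_event ls = {\<omega> \<in> space M. \<forall>l\<in>set ls. lozenge_present m (X \<omega>) l}"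

definition lozenge_prob :: "lozenge list \<Rightarrow> real" where
  "lozenge_prob ls = prob (lozenge_event ls)"

lemma lozenge_event_measurable [measurable]: "lozenge_event ls \<in> sets M"
  unfolding lozenge_event_def
  by (cases "ls = []") (auto intro!: sets.sets_Collect_finite_All' lozenge_present_measurable)

lemma lozenge_event_Cons:
  "lozenge_event (l # r) = lozenge_event r \<inter> {\<omega> \<in> space M. lozenge_present m (X \<omega>) l}"
  unfolding lozenge_event_def by auto

lemma lozenge_prob_Cons_split:
  assumes "AE \<omega> in M. \<omega> \<in> lozenge_event r \<longrightarrow>
      exactly_one_of (lozenge_present m (X \<omega>) l1) (lozenge_present m (X \<omega>) l2) (lozenge_present m (X \<omega>) l3)"
  shows "lozenge_prob (l1 # r) + lozenge_prob (l2 # r) + lozenge_prob (l3 # r) = lozenge_prob r"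
  unfolding lozenge_prob_def lozenge_event_Cons
  using assms lozenge_present_measurable by (intro measure_split_three_AE) auto

lemma AE_lozenges_at_white_partition:
  assumes n: "n \<ge> 1"
  shows "AE \<omega> in M. exactly_one_of
    (lozenge_present m (X \<omega>) (y + delta m n, Suc n, y + delta m n, Suc n))
    (lozenge_present m (X \<omega>) (y + 1, n, y + delta m n, Suc n))
    (lozenge_present m (X \<omega>) (y, n, y + delta m n, Suc n))"
  using AE_interlacing_config
  by eventually_elim (use lozenges_at_white_partition n counts_mono[OF n] in blast)

lemma tendsto_lozenge_prob_type_III:
  assumes n: "n \<ge> 1"
  shows "((\<lambda>x. lozenge_prob ((x, n, x + delta m n, Suc n) # r)) \<longlongrightarrow> lozenge_prob r) at_top"
proof (rule filterlim_int_of_nat_at_topD)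
  let ?E = "\<lambda>j::nat. lozenge_event ((int j, n, int j + delta m n, Suc n) # r)"
  have "AE \<omega> in M. (\<lambda>j. indicator (?E j) \<omega>) \<longlonglongrightarrow> (indicator (lozenge_event r) \<omega> :: real)"
    using AE_interlacing_config
  proof eventually_elim
    case (elim \<omega>)
    have "eventually (\<lambda>x. lozenge_present m (X \<omega>) (x, n, x + delta m n, Suc n)) at_top"
      using eventually_lozenge_present_type_III[OF elim n] counts_mono[OF n] by blast
    then have "eventually (\<lambda>j. lozenge_present m (X \<omega>) (int j, n, int j + delta m n, Suc n)) sequentially"
      by (rule eventually_compose_filterlim[OF _ filterlim_int_sequentially])
    then have "eventually (\<lambda>j. indicator (?E j) \<omega> = (indicator (lozenge_event r) \<omega> :: real)) sequentially"
      by eventually_elim (simp add: lozenge_event_def indicator_def)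
    then show ?case
      by (rule tendsto_eventually)
  qed
  then have "(\<lambda>j. integral\<^sup>L M (indicator (?E j))) \<longlonglongrightarrow> integral\<^sup>L M (indicator (lozenge_event r) :: 'a \<Rightarrow> real)"
    by (intro integral_dominated_convergence[where w = "\<lambda>_. 1"]) (auto simp: indicator_def)
  then show "((\<lambda>j. lozenge_prob ((int j, n, int j + delta m n, Suc n) # r)) \<longlongrightarrow> lozenge_prob r) sequentially"
    unfolding lozenge_prob_def by (simp add: Int_absorb2 sets.sets_into_space)
qed

lemma lozenge_relations_lozenge_prob: "lozenge_relations m L lozenge_prob"
proof
  show "m n \<le> m (Suc n)" if "n \<ge> 1" for n
    using counts_mono[OF that] ..
  show "lozenge_prob ls = lozenge_prob ls'" if "mset ls = mset ls'" for ls ls'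
    unfolding lozenge_prob_def lozenge_event_def using that by (metis set_mset_mset)
  show "lozenge_prob ls = 0" if "l \<in> set ls" "l' \<in> set ls" "viable m l" "viable m l'" "l \<noteq> l'"
    "black l = black l'" for ls l l'
  proof -
    have "lozenge_event ls = {}"
      using that lozenge_present_same_black[OF that(3,4,6,5)] unfolding lozenge_event_def by blast
    then show ?thesis
      unfolding lozenge_prob_def by simp
  qed
  show "lozenge_prob ls = 0" if "l \<in> set ls" "l' \<in> set ls" "viable m l" "viable m l'" "l \<noteq> l'"
    "white l = white l'" for ls l l'
  proof -
    have "AE \<omega> in M. \<omega> \<notin> lozenge_event ls"
      using AE_interlacing_config
      by eventually_elim (use that lozenge_present_same_white[OF _ counts_mono that(3,4,6,5)] in
        \<open>auto simp: lozenge_event_def\<close>)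
    then show ?thesis
      unfolding lozenge_prob_def by (simp add: prob_eq_0)
  qed
  show "lozenge_prob ((x, n, x, n) # r) + lozenge_prob ((x, n, x - 1 + delta m n, Suc n) # r)
      + lozenge_prob ((x, n, x + delta m n, Suc n) # r) = lozenge_prob r" for r x n
    using lozenges_at_black_partition by (intro lozenge_prob_Cons_split AE_I2) blast
  show "lozenge_prob ((y + delta m n, Suc n, y + delta m n, Suc n) # r)
      + lozenge_prob ((y + 1, n, y + delta m n, Suc n) # r)
      + lozenge_prob ((y, n, y + delta m n, Suc n) # r) = lozenge_prob r" if "n \<ge> 1" for r y n
    by (intro lozenge_prob_Cons_split eventually_mono[OF AE_lozenges_at_white_partition[OF that, of y]]) simp
  show "((\<lambda>x. lozenge_prob ((x, n, x + delta m n, Suc n) # r)) \<longlongrightarrow> lozenge_prob r) at_top"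
    if "n \<ge> 1" for r n
    using that by (rule tendsto_lozenge_prob_type_III)
qed

lemma lozenge_prob_particles:
  fixes K :: "int \<times> nat \<Rightarrow> int \<times> nat \<Rightarrow> real" and C :: "int \<times> nat \<Rightarrow> real"
  assumes determinantal: "\<And>ps. distinct ps \<Longrightarrow> set ps \<subseteq> Xfrak \<Longrightarrow>
      prob {\<omega> \<in> space M. \<forall>p\<in>set ps. p \<in> X \<omega>} = det (kernel_mat K ps ps)"
    and C_nz: "\<And>p. p \<in> Xfrak \<Longrightarrow> C p \<noteq> 0"
    and ls: "admissible m L ls" and particles: "\<forall>l\<in>set ls. white l = black l"
  shows "lozenge_prob ls = lozenge_det (\<lambda>p q. C p / C q * K p q) ls"
proof -
  define ps where "ps = map black ls"
  have particle: "\<exists>x n. l = (x, n, x, n)" if "l \<in> set ls" for l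
    using particles that by (cases l) auto
  have white_eq: "map white ls = ps"
    unfolding ps_def using particles by (intro map_cong) auto
  have "inj_on black (set ls)"
  proof (rule inj_onI)
    fix l l' assume "l \<in> set ls" "l' \<in> set ls" "black l = black l'"
    with particle[of l] particle[of l'] show "l = l'"
      by auto
  qed
  then have "distinct ps"
    using ls unfolding ps_def admissible_def by (simp add: distinct_map)
  moreover have Xfrak: "set ps \<subseteq> Xfrak"
    using ls viable_levels unfolding ps_def admissible_def Xfrak_def by fastforce
  moreover have "lozenge_present m S l \<longleftrightarrow> black l \<in> S" if "l \<in> set ls" for l S
    using particle[OF that] by auto
  then have "lozenge_event ls = {\<omega> \<in> space M. \<forall>p\<in>set ps. p \<in> X \<omega>}"
    unfolding lozenge_event_def ps_def by auto
  ultimately have "lozenge_prob ls = det (kernel_mat K ps ps)"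
    unfolding lozenge_prob_def by (simp add: determinantal)
  also have "\<dots> = det (kernel_mat (\<lambda>p q. C p / C q * K p q) ps ps)"
    using C_nz Xfrak by (intro det_kernel_mat_conjugate[symmetric]) auto
  also have "\<dots> = lozenge_det (\<lambda>p q. C p / C q * K p q) ls"
    unfolding lozenge_det_def white_eq ps_def ..
  finally show ?thesis .
qed

theorem lozenge_prob_eq_lozenge_det:
  fixes K :: "int \<times> nat \<Rightarrow> int \<times> nat \<Rightarrow> real" and C :: "int \<times> nat \<Rightarrow> real"
  assumes kernel: "lozenge_kernel m L (\<lambda>p q. C p / C q * K p q)"
    and determinantal: "\<And>ps. distinct ps \<Longrightarrow> set ps \<subseteq> Xfrak \<Longrightarrow>
      prob {\<omega> \<in> space M. \<forall>p\<in>set ps. p \<in> X \<omega>} = det (kernel_mat K ps ps)"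
    and C_nz: "\<And>p. p \<in> Xfrak \<Longrightarrow> C p \<noteq> 0"
    and ls: "admissible m L ls"
  shows "lozenge_prob ls = lozenge_det (\<lambda>p q. C p / C q * K p q) ls"
proof -
  interpret D: lozenge_kernel m L "\<lambda>p q. C p / C q * K p q"
    by (fact kernel)
  interpret F: lozenge_relations m L "\<lambda>ls. lozenge_prob ls - lozenge_det (\<lambda>p q. C p / C q * K p q) ls"
    by (rule lozenge_relations_diff[OF lozenge_relations_lozenge_prob D.lozenge_relations_axioms])
  have "lozenge_prob ls - lozenge_det (\<lambda>p q. C p / C q * K p q) ls = 0"
    using ls by (rule F.vanishes_if_vanishes_on_particles[rotated])
      (simp add: lozenge_prob_particles[OF determinantal C_nz])
  then show ?thesis
    by simp
qed

end

lemma mat_case_lozenges_eq_kernel_mat: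
  "mat (length ls) (length ls)
     (\<lambda>(i, j). case ls ! i of (x, n, _, _) \<Rightarrow> case ls ! j of (_, _, x', n') \<Rightarrow> f x n x' n')
   = kernel_mat (\<lambda>b w. f (fst b) (snd b) (fst w) (snd w)) (map black ls) (map white ls)"
  by (rule eq_matI) (auto split: prod.splits)

theorem proposition2p5:
  fixes M :: "'a measure"
    and X :: "real \<Rightarrow> 'a \<Rightarrow> (int \<times> nat) set"
    and m :: "nat \<Rightarrow> nat"
    and K :: "int \<Rightarrow> nat \<Rightarrow> int \<Rightarrow> nat \<Rightarrow> real \<Rightarrow> real"
    and C :: "int \<times> nat \<Rightarrow> real"
    and L :: int
  assumes prob: "prob_space M"
    and in_Xfrak: "\<And>t \<omega>. t \<ge> 0 \<Longrightarrow> \<omega> \<in> space M \<Longrightarrow> X t \<omega> \<subseteq> Xfrak"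
    and meas: "\<And>t p. t \<ge> 0 \<Longrightarrow> {\<omega> \<in> space M. p \<in> X t \<omega>} \<in> sets M"
    and m_mono: "\<And>n. n \<ge> 1 \<Longrightarrow> m n \<le> m (Suc n) \<and> m (Suc n) \<le> m n + 1"
    and counts: "\<And>t. t \<ge> 0 \<Longrightarrow> AE \<omega> in M. \<forall>n\<ge>1. finite (level (X t \<omega>) n) \<and> card (level (X t \<omega>) n) = m n"
    and interl: "\<And>t. t \<ge> 0 \<Longrightarrow> AE \<omega> in M. interlacing m (X t \<omega>)"
    and determinantal: "\<And>t ps. t \<ge> 0 \<Longrightarrow> distinct ps \<Longrightarrow> set ps \<subseteq> Xfrak \<Longrightarrow>
        measure M {\<omega> \<in> space M. \<forall>p\<in>set ps. p \<in> X t \<omega>} =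
        det (mat (length ps) (length ps)
               (\<lambda>(i, j). K (fst (ps ! i)) (snd (ps ! i)) (fst (ps ! j)) (snd (ps ! j)) t))"
    and C_nz: "\<And>p. p \<in> Xfrak \<Longrightarrow> C p \<noteq> 0"
    and C1: "\<And>t x n x' n'. t \<ge> 0 \<Longrightarrow> n \<ge> 1 \<Longrightarrow> n' \<ge> 1 \<Longrightarrow> x \<ge> L \<Longrightarrow> x' \<ge> L \<Longrightarrow>
        Ktilde C K x n x' n' t + Ktilde C K x n (x' - 1 + delta m n') (Suc n') t
          + Ktilde C K x n (x' + delta m n') (Suc n') t
        = (if (x, n) = (x', n') then 1 else 0)"
    and C2: "\<And>t x n x' n'. t \<ge> 0 \<Longrightarrow> n \<ge> 2 \<Longrightarrow> n' \<ge> 1 \<Longrightarrow> x \<ge> L \<Longrightarrow> x' \<ge> L \<Longrightarrow>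
        Ktilde C K x n x' n' t + Ktilde C K (x + 1 - delta m (n - 1)) (n - 1) x' n' t
          + Ktilde C K (x - delta m (n - 1)) (n - 1) x' n' t
        = (if (x, n) = (x', n') then 1 else 0)"
    and C3: "\<And>t n n' n'' x' x''. t \<ge> 0 \<Longrightarrow> n \<ge> 1 \<Longrightarrow> n' \<ge> 1 \<Longrightarrow> n'' \<ge> 1 \<Longrightarrow>
        x' > L \<Longrightarrow> x'' > L \<Longrightarrow>
        ((\<lambda>x. Ktilde C K x n x' n' t * Ktilde C K x'' n'' (x - 1 + delta m n) (Suc n) t)
           \<longlongrightarrow> 0) at_top"
    and C4: "\<And>t n n' n'' x' x''. t \<ge> 0 \<Longrightarrow> n \<ge> 1 \<Longrightarrow> n' \<ge> 1 \<Longrightarrow> n'' \<ge> 1 \<Longrightarrow>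
        x' > L \<Longrightarrow> x'' > L \<Longrightarrow>
        ((\<lambda>x. Ktilde C K x n x' n' t * Ktilde C K x'' n'' (x + delta m n) (Suc n) t)
           \<longlongrightarrow> 0) at_top"
    and C5: "\<And>t n. t \<ge> 0 \<Longrightarrow> n \<ge> 1 \<Longrightarrow>
        ((\<lambda>x. Ktilde C K x n (x - 1 + delta m n) (Suc n) t) \<longlongrightarrow> 0) at_top"
    and C6: "\<And>t n. t \<ge> 0 \<Longrightarrow> n \<ge> 1 \<Longrightarrow>
        ((\<lambda>x. Ktilde C K x n (x + delta m n) (Suc n) t) \<longlongrightarrow> 1) at_top"
  shows "\<forall>t\<ge>0. \<forall>ls :: (int \<times> nat \<times> int \<times> nat) list.
     (\<forall>l\<in>set ls. viable m l) \<and>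
     distinct (map (\<lambda>(x, n, x', n'). (x, n)) ls) \<and>
     distinct (map (\<lambda>(x, n, x', n'). (x', n')) ls) \<and>
     (\<forall>(x, n, x', n')\<in>set ls. x > L \<and> x' > L) \<longrightarrow>
     measure M {\<omega> \<in> space M. \<forall>l\<in>set ls. lozenge_present m (X t \<omega>) l} =
     det (mat (length ls) (length ls)
       (\<lambda>(i, j). case ls ! i of (x, n, _, _) \<Rightarrow> case ls ! j of (_, _, x', n') \<Rightarrow>
           Ktilde C K x n x' n' t))"
proof (intro allI impI, goal_cases)
  case (1 t ls)
  then have t: "t \<ge> 0" and ls: "admissible m L ls"
    by (auto simp: admissible_def distinct_map)
  have AE_config: "AE \<omega> in M. interlacing_config m (X t \<omega>)"
    using counts[OF t] interl[OF t] by eventually_elim (simp add: interlacing_config_def)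
  interpret interlacing_process M "X t" m
    by (intro interlacing_process.intro[OF prob] interlacing_process_axioms.intro meas[OF t] m_mono
        AE_config)
  have "lozenge_kernel m L (\<lambda>p q. C p / C q * K (fst p) (snd p) (fst q) (snd q) t)"
    by unfold_locales (use m_mono C1[OF t] C2[OF t] C4[OF t] C6[OF t] in \<open>simp_all add: Ktilde_def\<close>)
  then have "lozenge_prob ls = lozenge_det (\<lambda>p q. C p / C q * K (fst p) (snd p) (fst q) (snd q) t) ls"
    by (rule lozenge_prob_eq_lozenge_det[OF _ _ C_nz ls]) (simp add: determinantal[OF t] kernel_mat_def)
  then show ?case
    unfolding lozenge_prob_def lozenge_event_def mat_case_lozenges_eq_kernel_mat lozenge_det_def
    by (simp add: Ktilde_def)
qed

end
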